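(* Let $n\ge 1$, $p\in\{0,\dots,n\}$, $\mathcal{X}=\{x\in\{0,1\}^n:\sum_{i=1}^n x_i=p\}$ (the minimum selection problem), $\hat c\in\mathbb{R}^n_{\ge0}$, and fix $\lambda\in[0,1]$. Let $\mathcal{U}=\prod_{i=1}^n[(1-\lambda)\hat c_i,(1+\lambda)\hat c_i]$. Then a nominal solution $\hat x$ (a minimizer of $\hat c^tx$ over $\mathcal{X}$) is an optimal solution of the min-max regret selection problem \[ \min_{x\in\mathcal{X}}\ \max_{c\in\mathcal{U}}\Big(c^tx-\min_{y\in\mathcal{X}}c^ty\Big). \] *)

theory Defs
  imports "HOL-Analysis.Analysis"
begin

(* Vectors in R^n / {0,1}^n are represented as functions nat => real, relevant on {..<n}. *)

definition sel_set :: "nat \<Rightarrow> nat \<Rightarrow> (nat \<Rightarrow> real) set" where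
  "sel_set n p = {x. (\<forall>i<n. x i = 0 \<or> x i = 1) \<and> (\<forall>i\<ge>n. x i = 0) \<and> (\<Sum>i<n. x i) = real p}"

definition cost :: "nat \<Rightarrow> (nat \<Rightarrow> real) \<Rightarrow> (nat \<Rightarrow> real) \<Rightarrow> real" where
  "cost n c x = (\<Sum>i<n. c i * x i)"

definition unc_set :: "nat \<Rightarrow> real \<Rightarrow> (nat \<Rightarrow> real) \<Rightarrow> (nat \<Rightarrow> real) set" where
  "unc_set n lam ch = {c. (\<forall>i<n. (1 - lam) * ch i \<le> c i \<and> c i \<le> (1 + lam) * ch i) \<and> (\<forall>i\<ge>n. c i = 0)}"

definition regret :: "nat \<Rightarrow> nat \<Rightarrow> (nat \<Rightarrow> real) \<Rightarrow> (nat \<Rightarrow> real) \<Rightarrow> real" where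
  "regret n p c x = cost n c x - (INF y\<in>sel_set n p. cost n c y)"

definition max_regret :: "nat \<Rightarrow> nat \<Rightarrow> real \<Rightarrow> (nat \<Rightarrow> real) \<Rightarrow> (nat \<Rightarrow> real) \<Rightarrow> real" where
  "max_regret n p lam ch x = (SUP c\<in>unc_set n lam ch. regret n p c x)"

end

theory Submission
  imports Defs
begin

text \<open>For a feasible x let \<open>c\<^sup>x\<close> be the scenario charging \<open>(1 + \<lambda>) \<hat>c\<^sub>i\<close> on the items chosen by x
and \<open>(1 - \<lambda>) \<hat>c\<^sub>i\<close> on all others. A permutation \<sigma> of the items exchanging those chosen by x
but not by \<open>\<hat>x\<close> with those chosen by \<open>\<hat>x\<close> but not by x carries \<open>\<hat>x\<close> to x, and nominal optimality
of \<open>\<hat>x\<close> means that \<sigma> sends items chosen by x to nominally cheaper ones and the others to dearer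
ones. Comparing coordinatewise gives \<open>c\<^sup>t\<hat>x - c\<^sup>ty \<le> (c\<^sup>x)\<^sup>tx - (c\<^sup>x)\<^sup>t(y \<circ> \<sigma>)\<close> for every scenario c and
feasible y, so the regret of \<open>\<hat>x\<close> under any c is at most the regret of x under \<open>c\<^sup>x\<close>.\<close>

lemma obtain_permutation_matching_predicates:
  fixes P Q :: "'a \<Rightarrow> bool"
  assumes "finite A" and "card {k\<in>A. P k} = card {k\<in>A. Q k}"
  obtains \<sigma> where "bij_betw \<sigma> A A" and "\<forall>k\<in>A. Q (\<sigma> k) \<longleftrightarrow> P k"
    and "\<forall>k\<in>A. (P k \<longleftrightarrow> Q k) \<longrightarrow> \<sigma> k = k"
proof -
  define S1 where "S1 = {k\<in>A. P k \<and> \<not> Q k}"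
  define S2 where "S2 = {k\<in>A. Q k \<and> \<not> P k}"
  define R where "R = {k\<in>A. P k \<longleftrightarrow> Q k}"
  define PQ where "PQ = {k\<in>A. P k \<and> Q k}"
  have fin: "finite S1" "finite S2" "finite PQ"
    using assms(1) by (simp_all add: S1_def S2_def PQ_def)
  have "{k\<in>A. P k} = PQ \<union> S1" "{k\<in>A. Q k} = PQ \<union> S2"
    by (auto simp: S1_def S2_def PQ_def)
  moreover have "PQ \<inter> S1 = {}" "PQ \<inter> S2 = {}"
    by (auto simp: S1_def S2_def PQ_def)
  ultimately have "card S1 = card S2"
    using assms(2) fin by (simp add: card_Un_disjoint)
  then obtain f where f: "bij_betw f S1 S2"
    using fin finite_same_card_bij by blast
  have "bij_betw (\<lambda>k. if k \<in> S2 then inv_into S1 f k else k) (S2 \<union> R) (S1 \<union> R)"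
    by (rule bij_betw_disjoint_Un[OF bij_betw_inv_into[OF f] bij_betw_id[unfolded id_def]])
      (auto simp: S1_def S2_def R_def)
  then have "bij_betw (\<lambda>k. if k \<in> S1 then f k else if k \<in> S2 then inv_into S1 f k else k)
      (S1 \<union> (S2 \<union> R)) (S2 \<union> (S1 \<union> R))"
    by (rule bij_betw_disjoint_Un[OF f]) (auto simp: S1_def S2_def R_def)
  moreover have "S1 \<union> (S2 \<union> R) = A" "S2 \<union> (S1 \<union> R) = A"
    by (auto simp: S1_def S2_def R_def)
  moreover have "f k \<in> S2" if "k \<in> S1" for k
    using f that bij_betwE by blast
  moreover have "inv_into S1 f k \<in> S1" if "k \<in> S2" for k
    using bij_betw_inv_into[OF f] that bij_betwE by blast
  ultimately show ?thesis
    by (intro that) (auto simp: S1_def S2_def R_def)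
qed

lemma sel_set_binary: "y \<in> sel_set n p \<Longrightarrow> k < n \<Longrightarrow> y k = 0 \<or> y k = 1"
  by (simp add: sel_set_def)

lemma card_ones_sel_set:
  assumes "y \<in> sel_set n p"
  shows "card {k\<in>{..<n}. y k = 1} = p"
proof -
  have "(\<Sum>k<n. y k) = (\<Sum>k<n. if y k = 1 then 1 else 0)"
    by (rule sum.cong) (use sel_set_binary[OF assms] in auto)
  also have "\<dots> = real (card {k\<in>{..<n}. y k = 1})"
    by (simp add: sum.If_cases Collect_conj_eq Int_commute lessThan_def)
  finally show ?thesis
    using assms by (simp add: sel_set_def)
qed

lemma sel_set_permute:
  assumes "y \<in> sel_set n p" and "bij_betw \<sigma> {..<n} {..<n}"
  shows "(\<lambda>k. if k < n then y (\<sigma> k) else 0) \<in> sel_set n p"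
proof -
  have "(\<Sum>k<n. y (\<sigma> k)) = (\<Sum>k<n. y k)"
    using sum.reindex_bij_betw[OF assms(2)] .
  moreover have "\<sigma> k < n" if "k < n" for k
    using assms(2) that bij_betwE by blast
  ultimately show ?thesis
    using assms(1) by (auto simp: sel_set_def)
qed

lemma obtain_sel_set_permutation:
  assumes "x \<in> sel_set n p" and "xh \<in> sel_set n p"
  obtains \<sigma> where "bij_betw \<sigma> {..<n} {..<n}" and "\<forall>k<n. xh (\<sigma> k) = x k"
    and "\<forall>k<n. x k = xh k \<longrightarrow> \<sigma> k = k"
proof -
  obtain \<sigma> where \<sigma>: "bij_betw \<sigma> {..<n} {..<n}" "\<forall>k\<in>{..<n}. xh (\<sigma> k) = 1 \<longleftrightarrow> x k = 1"
    "\<forall>k\<in>{..<n}. (x k = 1 \<longleftrightarrow> xh k = 1) \<longrightarrow> \<sigma> k = k"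
    using obtain_permutation_matching_predicates[of "{..<n}" "\<lambda>k. x k = 1" "\<lambda>k. xh k = 1"]
      card_ones_sel_set[OF assms(1)] card_ones_sel_set[OF assms(2)] by auto
  have "xh (\<sigma> k) = x k" if "k < n" for k
  proof -
    have "\<sigma> k < n"
      using \<sigma>(1) that bij_betwE by blast
    then show ?thesis
      using \<sigma>(2) that sel_set_binary[OF assms(1) that] sel_set_binary[OF assms(2)] by force
  qed
  then show ?thesis
    using that[OF \<sigma>(1)] \<sigma>(3) by simp
qed

lemma abs_cost_sel_set_le:
  assumes "y \<in> sel_set n p"
  shows "\<bar>cost n c y\<bar> \<le> (\<Sum>k<n. \<bar>c k\<bar>)"
proof -
  have "\<bar>cost n c y\<bar> \<le> (\<Sum>k<n. \<bar>c k * y k\<bar>)"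
    unfolding cost_def by (rule sum_abs)
  also have "\<dots> \<le> (\<Sum>k<n. \<bar>c k\<bar>)"
    by (rule sum_mono) (use sel_set_binary[OF assms] in fastforce)
  finally show ?thesis .
qed

lemma bdd_below_cost_sel_set: "bdd_below (cost n c ` sel_set n p)"
proof (rule bdd_belowI2)
  fix y assume "y \<in> sel_set n p"
  from abs_cost_sel_set_le[OF this, of c] show "- (\<Sum>k<n. \<bar>c k\<bar>) \<le> cost n c y"
    by linarith
qed

lemma regret_le_sum_abs:
  assumes "x \<in> sel_set n p"
  shows "regret n p c x \<le> 2 * (\<Sum>k<n. \<bar>c k\<bar>)"
proof -
  have "- (\<Sum>k<n. \<bar>c k\<bar>) \<le> (INF y\<in>sel_set n p. cost n c y)"
  proof (rule cINF_greatest)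
    fix y assume "y \<in> sel_set n p"
    from abs_cost_sel_set_le[OF this, of c] show "- (\<Sum>k<n. \<bar>c k\<bar>) \<le> cost n c y"
      by linarith
  qed (use assms in blast)
  then show ?thesis
    using abs_cost_sel_set_le[OF assms, of c] unfolding regret_def by linarith
qed

lemma abs_le_of_unc_set:
  assumes "c \<in> unc_set n lam ch" and "0 \<le> lam" and "k < n"
  shows "\<bar>c k\<bar> \<le> (1 + lam) * \<bar>ch k\<bar>"
proof -
  have "ch k - lam * ch k \<le> c k" "c k \<le> ch k + lam * ch k"
    using assms(1,3) by (auto simp: unc_set_def algebra_simps)
  moreover have "lam * \<bar>ch k\<bar> = \<bar>lam * ch k\<bar>"
    using assms(2) by (simp add: abs_mult)
  ultimately show ?thesis
    by (auto simp: algebra_simps abs_if split: if_splits)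
qed

lemma bdd_above_regret_unc_set:
  assumes "x \<in> sel_set n p" and "0 \<le> lam"
  shows "bdd_above ((\<lambda>c. regret n p c x) ` unc_set n lam ch)"
proof (rule bdd_aboveI2)
  fix c assume "c \<in> unc_set n lam ch"
  then have "(\<Sum>k<n. \<bar>c k\<bar>) \<le> (\<Sum>k<n. (1 + lam) * \<bar>ch k\<bar>)"
    by (intro sum_mono) (use abs_le_of_unc_set assms(2) in auto)
  then show "regret n p c x \<le> 2 * (\<Sum>k<n. (1 + lam) * \<bar>ch k\<bar>)"
    using regret_le_sum_abs[OF assms(1), of c] by linarith
qed

definition worst_case_scenario :: "nat \<Rightarrow> real \<Rightarrow> (nat \<Rightarrow> real) \<Rightarrow> (nat \<Rightarrow> real) \<Rightarrow> nat \<Rightarrow> real"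
  where "worst_case_scenario n lam ch x k =
    (if k < n then if x k = 1 then (1 + lam) * ch k else (1 - lam) * ch k else 0)"

lemma worst_case_scenario_in_unc_set:
  assumes "\<forall>k<n. 0 \<le> ch k" and "0 \<le> lam"
  shows "worst_case_scenario n lam ch x \<in> unc_set n lam ch"
  using assms by (auto simp: unc_set_def worst_case_scenario_def mult_right_mono)

lemma nominal_selected_le_unselected:
  assumes xh: "xh \<in> sel_set n p"
    and nominal: "\<forall>y\<in>sel_set n p. cost n ch xh \<le> cost n ch y"
    and i: "i < n" "xh i = 0" and j: "j < n" "xh j = 1"
  shows "ch j \<le> ch i"
proof -
  have ij: "i \<noteq> j"
    using i j by auto
  define z where "z = xh(i := 1, j := 0)"
  have "(\<Sum>k<n. z k) = (\<Sum>k<n. xh k) + (\<Sum>k<n. if k = i then 1 else 0) - (\<Sum>k<n. if k = j then 1 else 0)"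
    unfolding sum_subtractf[symmetric] sum.distrib[symmetric]
    by (rule sum.cong) (use i j ij in \<open>auto simp: z_def\<close>)
  then have "z \<in> sel_set n p"
    using xh i j ij by (auto simp: sel_set_def z_def)
  then have "cost n ch xh \<le> cost n ch z"
    using nominal by blast
  moreover have "cost n ch z = cost n ch xh + (\<Sum>k<n. if k = i then ch i else 0) - (\<Sum>k<n. if k = j then ch j else 0)"
    unfolding cost_def sum_subtractf[symmetric] sum.distrib[symmetric]
    by (rule sum.cong) (use i j ij in \<open>auto simp: z_def\<close>)
  ultimately show ?thesis
    using i j by simp
qed

lemma cost_gap_le_worst_case_scenario:
  assumes x: "x \<in> sel_set n p" and y: "y \<in> sel_set n p"
    and c: "c \<in> unc_set n lam ch" and lam: "0 \<le> lam" "lam \<le> 1"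
    and \<sigma>: "bij_betw \<sigma> {..<n} {..<n}" "\<forall>k<n. xh (\<sigma> k) = x k"
    and up: "\<forall>k<n. x k = 1 \<longrightarrow> ch (\<sigma> k) \<le> ch k"
    and down: "\<forall>k<n. x k = 0 \<longrightarrow> ch k \<le> ch (\<sigma> k)"
  defines "c' \<equiv> worst_case_scenario n lam ch x"
  shows "cost n c xh - cost n c y \<le> cost n c' x - cost n c' (\<lambda>k. if k < n then y (\<sigma> k) else 0)"
proof -
  have "cost n c xh - cost n c y = (\<Sum>k<n. c k * (xh k - y k))"
    unfolding cost_def by (simp add: sum_subtractf right_diff_distrib)
  also have "\<dots> = (\<Sum>k<n. c (\<sigma> k) * (x k - y (\<sigma> k)))"
    using sum.reindex_bij_betw[OF \<sigma>(1), of "\<lambda>k. c k * (xh k - y k)"] \<sigma>(2) by simp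
  also have "\<dots> \<le> (\<Sum>k<n. c' k * (x k - y (\<sigma> k)))"
  proof (rule sum_mono)
    fix k assume k: "k \<in> {..<n}"
    then have "\<sigma> k < n"
      using \<sigma>(1) bij_betwE by blast
    then have "y (\<sigma> k) = 0 \<or> y (\<sigma> k) = 1" "(1 - lam) * ch (\<sigma> k) \<le> c (\<sigma> k)"
      "c (\<sigma> k) \<le> (1 + lam) * ch (\<sigma> k)"
      using sel_set_binary[OF y] c by (auto simp: unc_set_def)
    moreover have "x k = 1 \<Longrightarrow> (1 + lam) * ch (\<sigma> k) \<le> (1 + lam) * ch k"
      using up k lam by (auto intro: mult_left_mono)
    moreover have "x k = 0 \<Longrightarrow> (1 - lam) * ch k \<le> (1 - lam) * ch (\<sigma> k)"
      using down k lam by (auto intro: mult_left_mono)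
    ultimately show "c (\<sigma> k) * (x k - y (\<sigma> k)) \<le> c' k * (x k - y (\<sigma> k))"
      using sel_set_binary[OF x, of k] k by (auto simp: c'_def worst_case_scenario_def)
  qed
  also have "\<dots> = cost n c' x - cost n c' (\<lambda>k. if k < n then y (\<sigma> k) else 0)"
    unfolding cost_def by (simp add: sum_subtractf right_diff_distrib)
  finally show ?thesis .
qed

lemma regret_nominal_le_worst_case_regret:
  assumes xh: "xh \<in> sel_set n p"
    and nominal: "\<forall>y\<in>sel_set n p. cost n ch xh \<le> cost n ch y"
    and x: "x \<in> sel_set n p" and c: "c \<in> unc_set n lam ch" and lam: "0 \<le> lam" "lam \<le> 1"
  shows "regret n p c xh \<le> regret n p (worst_case_scenario n lam ch x) x"
proof -
  obtain \<sigma> where \<sigma>: "bij_betw \<sigma> {..<n} {..<n}" "\<forall>k<n. xh (\<sigma> k) = x k"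
    and fixed: "\<forall>k<n. x k = xh k \<longrightarrow> \<sigma> k = k"
    using obtain_sel_set_permutation[OF x xh] by blast
  have "\<sigma> k < n" if "k < n" for k
    using \<sigma>(1) that bij_betwE by blast
  then have "\<forall>k<n. x k = 1 \<longrightarrow> ch (\<sigma> k) \<le> ch k" "\<forall>k<n. x k = 0 \<longrightarrow> ch k \<le> ch (\<sigma> k)"
    using nominal_selected_le_unselected[OF xh nominal] \<sigma>(2) fixed sel_set_binary[OF xh]
    by (metis order_refl)+
  note gap = cost_gap_le_worst_case_scenario[OF x _ c lam \<sigma> this]
  let ?c' = "worst_case_scenario n lam ch x"
  have "cost n c xh - regret n p ?c' x \<le> (INF y\<in>sel_set n p. cost n c y)"
  proof (rule cINF_greatest)
    fix y assume y: "y \<in> sel_set n p"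
    have "(INF z\<in>sel_set n p. cost n ?c' z) \<le> cost n ?c' (\<lambda>k. if k < n then y (\<sigma> k) else 0)"
      by (rule cINF_lower[OF bdd_below_cost_sel_set sel_set_permute[OF y \<sigma>(1)]])
    with gap[OF y] show "cost n c xh - regret n p ?c' x \<le> cost n c y"
      unfolding regret_def by linarith
  qed (use x in blast)
  then show ?thesis
    unfolding regret_def by linarith
qed

theorem theorem3:
  fixes n p :: nat and lam :: real and ch xh :: "nat \<Rightarrow> real"
  assumes "n \<ge> 1" and "p \<le> n"
    and "\<forall>i<n. ch i \<ge> 0"
    and "0 \<le> lam" and "lam \<le> 1"
    and "xh \<in> sel_set n p"
    and "\<forall>y\<in>sel_set n p. cost n ch xh \<le> cost n ch y"
  shows "\<forall>x\<in>sel_set n p. max_regret n p lam ch xh \<le> max_regret n p lam ch x"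
proof
  fix x assume x: "x \<in> sel_set n p"
  have "worst_case_scenario n lam ch x \<in> unc_set n lam ch"
    using worst_case_scenario_in_unc_set assms(3,4) by blast
  moreover have "regret n p c xh \<le> regret n p (worst_case_scenario n lam ch x) x"
    if "c \<in> unc_set n lam ch" for c
    using regret_nominal_le_worst_case_regret assms(4-7) x that by blast
  ultimately show "max_regret n p lam ch xh \<le> max_regret n p lam ch x"
    unfolding max_regret_def
    by (intro cSUP_mono bdd_above_regret_unc_set x assms(4)) auto
qed

end
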